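(* For any graph $G$ and any two independent sets $I_s,I_t$ of $G$, a shortest reconfiguration sequence from $I_s$ to $I_t$ has length at most $\mathrm{cc}(I_s\triangle I_t)$.
   Context: All graphs are finite, simple and undirected. For $V'\subseteq V(G)$, $\mathrm{cc}(V')$ denotes the number of connected components of the induced subgraph $G[V']$. A reconfiguration sequence from $I_s$ to $I_t$ of length $\ell$ is a sequence $\langle I_s=I_0,\dots,I_\ell=I_t\rangle$ of independent sets of $G$ such that $G[I_{i-1}\triangle I_i]$ is connected for every $i\in\{1,\dots,\ell\}$. *)

theory Defs
  imports Main
begin

definition simple_graph :: "'a set \<Rightarrow> ('a \<Rightarrow> 'a \<Rightarrow> bool) \<Rightarrow> bool" where
  "simple_graph V E \<longleftrightarrow> finite V \<and> (\<forall>u v. E u v \<longrightarrow> u \<in> V \<and> v \<in> V)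
     \<and> (\<forall>u v. E u v \<longrightarrow> E v u) \<and> (\<forall>v. \<not> E v v)"

definition independent_set :: "'a set \<Rightarrow> ('a \<Rightarrow> 'a \<Rightarrow> bool) \<Rightarrow> 'a set \<Rightarrow> bool" where
  "independent_set V E I \<longleftrightarrow> I \<subseteq> V \<and> (\<forall>u\<in>I. \<forall>v\<in>I. \<not> E u v)"

definition reach_in :: "('a \<Rightarrow> 'a \<Rightarrow> bool) \<Rightarrow> 'a set \<Rightarrow> 'a \<Rightarrow> 'a \<Rightarrow> bool" where
  "reach_in E S u v \<longleftrightarrow> (\<lambda>x y. x \<in> S \<and> y \<in> S \<and> E x y)\<^sup>*\<^sup>* u v \<and> u \<in> S \<and> v \<in> S"

definition components :: "('a \<Rightarrow> 'a \<Rightarrow> bool) \<Rightarrow> 'a set \<Rightarrow> 'a set set" where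
  "components E S = (\<lambda>v. {u. reach_in E S v u}) ` S"

definition cc :: "('a \<Rightarrow> 'a \<Rightarrow> bool) \<Rightarrow> 'a set \<Rightarrow> nat" where
  "cc E S = card (components E S)"

definition induced_connected :: "('a \<Rightarrow> 'a \<Rightarrow> bool) \<Rightarrow> 'a set \<Rightarrow> bool" where
  "induced_connected E S \<longleftrightarrow> S \<noteq> {} \<and> (\<forall>u\<in>S. \<forall>v\<in>S. reach_in E S u v)"

definition sym_diff :: "'a set \<Rightarrow> 'a set \<Rightarrow> 'a set" where
  "sym_diff A B = (A - B) \<union> (B - A)"

definition reconf_seq :: "'a set \<Rightarrow> ('a \<Rightarrow> 'a \<Rightarrow> bool) \<Rightarrow> 'a set \<Rightarrow> 'a set \<Rightarrow> 'a set list \<Rightarrow> bool" where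
  "reconf_seq V E Is It seq \<longleftrightarrow> seq \<noteq> [] \<and> hd seq = Is \<and> last seq = It
     \<and> (\<forall>I\<in>set seq. independent_set V E I)
     \<and> (\<forall>i. 0 < i \<and> i < length seq \<longrightarrow> induced_connected E (sym_diff (seq ! (i - 1)) (seq ! i)))"

definition seq_length :: "'a set list \<Rightarrow> nat" where
  "seq_length seq = length seq - 1"

end

theory Submission
  imports Defs
begin

text \<open>Flip the components of G[Is \<triangle> It] one at a time. A vertex of It in a component C
has all its neighbours in Is \<triangle> It inside C, so exchanging Is and It on any union of
components leaves an independent set, and two consecutive sets differ by exactly one
component, which is connected. This yields a reconfiguration sequence with cc(Is \<triangle> It)
steps; a shortest one exists since lengths are natural numbers.\<close>

lemma reach_in_refl: "v \<in> S \<Longrightarrow> reach_in E S v v"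
  by (simp add: reach_in_def)

lemma reach_in_trans: "reach_in E S u v \<Longrightarrow> reach_in E S v w \<Longrightarrow> reach_in E S u w"
  unfolding reach_in_def by (meson rtranclp_trans)

lemma reach_in_sym:
  assumes "symp E" "reach_in E S u v"
  shows "reach_in E S v u"
proof -
  have "symp (\<lambda>x y. x \<in> S \<and> y \<in> S \<and> E x y)"
    using assms(1) by (auto intro: sympI dest: sympD)
  then show ?thesis
    using assms(2) unfolding reach_in_def by (blast dest: sympD[OF symp_rtranclp])
qed

lemma reach_in_edge: "x \<in> S \<Longrightarrow> y \<in> S \<Longrightarrow> E x y \<Longrightarrow> reach_in E S x y"
  by (simp add: reach_in_def r_into_rtranclp)

lemma reach_in_within_reachable_set:
  assumes "reach_in E S v u"
  shows "reach_in E {x. reach_in E S v x} v u"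
proof -
  let ?C = "{x. reach_in E S v x}"
  have "v \<in> S" using assms by (simp add: reach_in_def)
  have "(\<lambda>x y. x \<in> S \<and> y \<in> S \<and> E x y)\<^sup>*\<^sup>* v u" using assms by (simp add: reach_in_def)
  then have "(\<lambda>x y. x \<in> ?C \<and> y \<in> ?C \<and> E x y)\<^sup>*\<^sup>* v u"
  proof (induction rule: rtranclp_induct)
    case base
    then show ?case by simp
  next
    case (step y z)
    then have "y \<in> ?C" "z \<in> ?C"
      using \<open>v \<in> S\<close> by (auto simp: reach_in_def intro: rtranclp.rtrancl_into_rtrancl)
    then show ?case using step by (auto intro: rtranclp.rtrancl_into_rtrancl)
  qed
  then show ?thesis using assms \<open>v \<in> S\<close> by (simp add: reach_in_def)
qed

lemma componentsE:
  assumes "C \<in> components E S"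
  obtains v where "v \<in> S" "C = {u. reach_in E S v u}"
  using assms by (auto simp: components_def)

lemma Union_components: "\<Union>(components E S) = S"
  unfolding components_def using reach_in_refl by (auto simp: reach_in_def)

lemma finite_components: "finite S \<Longrightarrow> finite (components E S)"
  by (simp add: components_def)

lemma component_eq:
  assumes "symp E" "C \<in> components E S" "w \<in> C"
  shows "C = {u. reach_in E S w u}"
proof -
  obtain v where C: "C = {u. reach_in E S v u}" using assms(2) by (rule componentsE)
  then have "reach_in E S v w" "reach_in E S w v"
    using assms(3) reach_in_sym[OF assms(1)] by auto
  then show ?thesis unfolding C by (auto intro: reach_in_trans)
qed

lemma components_disjoint:
  assumes "symp E" "C \<in> components E S" "C' \<in> components E S" "C \<noteq> C'"
  shows "C \<inter> C' = {}"
  using component_eq[OF assms(1,2)] component_eq[OF assms(1,3)] assms(4) by blast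

lemma component_connected:
  assumes "symp E" "C \<in> components E S"
  shows "induced_connected E C"
proof -
  obtain v where v: "v \<in> S" "C = {u. reach_in E S v u}" using assms(2) by (rule componentsE)
  have "reach_in E C v u" if "u \<in> C" for u
    using reach_in_within_reachable_set[of E S v u] that unfolding v(2) by simp
  then have "reach_in E C u w" if "u \<in> C" "w \<in> C" for u w
    using that by (meson reach_in_trans reach_in_sym[OF assms(1)])
  moreover have "v \<in> C" using v reach_in_refl by simp
  ultimately show ?thesis unfolding induced_connected_def by blast
qed

lemma component_closed_under_edges:
  assumes "C \<in> components E S" "x \<in> C" "y \<in> S" "E x y"
  shows "y \<in> C"
proof -
  obtain v where v: "v \<in> S" "C = {u. reach_in E S v u}" using assms(1) by (rule componentsE)
  then have "x \<in> S" using assms(2) by (simp add: reach_in_def)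
  with assms have "reach_in E S x y" by (simp add: reach_in_edge)
  with assms(2) v(2) show ?thesis by (auto intro: reach_in_trans)
qed

lemma sym_diff_commute: "sym_diff A B = sym_diff B A"
  by (auto simp: sym_diff_def)

lemma independent_set_flip_components:
  assumes "symp E" "independent_set V E I" "independent_set V E J"
    and "F \<subseteq> components E (sym_diff I J)"
  shows "independent_set V E (sym_diff I (\<Union>F))"
proof -
  have "\<Union>F \<subseteq> sym_diff I J"
    using Union_mono[OF assms(4)] by (simp only: Union_components)
  then have flip: "sym_diff I (\<Union>F) = (I - \<Union>F) \<union> (J \<inter> \<Union>F)"
    by (auto simp: sym_diff_def)
  have no_edge: "\<not> E v u" if u: "u \<in> I - \<Union>F" and v: "v \<in> J \<inter> \<Union>F" for u v
  proof
    assume "E v u"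
    obtain C where C: "C \<in> F" "v \<in> C" using v by blast
    have "u \<notin> C" using u C(1) by blast
    then have "u \<notin> sym_diff I J"
      using component_closed_under_edges[of C E "sym_diff I J" v u] C assms(4) \<open>E v u\<close> by blast
    then have "u \<in> J" using u by (simp add: sym_diff_def)
    then show False using v \<open>E v u\<close> assms(3) by (auto simp: independent_set_def)
  qed
  have no_edge': "\<not> E u v" if "u \<in> I - \<Union>F" "v \<in> J \<inter> \<Union>F" for u v
    using no_edge[OF that] assms(1) by (metis sympD)
  show ?thesis
    unfolding flip independent_set_def
  proof (intro conjI ballI)
    show "I - \<Union>F \<union> J \<inter> \<Union>F \<subseteq> V" using assms(2,3) by (auto simp: independent_set_def)
  next
    fix u v assume "u \<in> I - \<Union>F \<union> J \<inter> \<Union>F" "v \<in> I - \<Union>F \<union> J \<inter> \<Union>F"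
    then show "\<not> E u v"
      using assms(2,3) no_edge no_edge' unfolding independent_set_def by blast
  qed
qed

lemma reconf_seq_Cons:
  assumes "reconf_seq V E J It s" "independent_set V E I" "induced_connected E (sym_diff I J)"
  shows "reconf_seq V E I It (I # s)"
proof -
  have s: "s \<noteq> []" "hd s = J" "last s = It" "\<forall>K\<in>set s. independent_set V E K"
    and steps: "\<And>i. 0 < i \<Longrightarrow> i < length s \<Longrightarrow> induced_connected E (sym_diff (s ! (i - 1)) (s ! i))"
    using assms(1) unfolding reconf_seq_def by blast+
  have "induced_connected E (sym_diff ((I # s) ! (i - 1)) ((I # s) ! i))"
    if "0 < i" "i < length (I # s)" for i
  proof (cases "i = 1")
    case True
    then show ?thesis using s(1,2) assms(3) by (simp add: hd_conv_nth)
  next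
    case False
    with that(1) obtain k where "i = Suc (Suc k)"
      by (cases i) (auto simp: gr0_conv_Suc)
    then show ?thesis using steps[of "Suc k"] that(2) by simp
  qed
  with s assms(2) show ?thesis unfolding reconf_seq_def by simp
qed

lemma reconf_seq_flip_components:
  assumes "symp E" "independent_set V E Is" "independent_set V E It"
    and "finite F" "F \<subseteq> components E (sym_diff Is It)"
  shows "\<exists>s. reconf_seq V E (sym_diff It (\<Union>F)) It s \<and> seq_length s = card F"
  using assms(4,5)
proof (induction F rule: finite_induct)
  case empty
  have "reconf_seq V E It It [It]" using assms(3) by (simp add: reconf_seq_def)
  then show ?case by (auto simp: sym_diff_def seq_length_def)
next
  case (insert C F)
  then obtain s where s: "reconf_seq V E (sym_diff It (\<Union>F)) It s" "seq_length s = card F"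
    by blast
  have "C \<inter> \<Union>F = {}"
    using components_disjoint[OF assms(1)] insert by blast
  then have "sym_diff (sym_diff It (\<Union>(insert C F))) (sym_diff It (\<Union>F)) = C"
    by (auto simp: sym_diff_def)
  then have "induced_connected E (sym_diff (sym_diff It (\<Union>(insert C F))) (sym_diff It (\<Union>F)))"
    using component_connected[OF assms(1)] insert.prems by auto
  moreover have "insert C F \<subseteq> components E (sym_diff It Is)"
    using insert.prems by (simp only: sym_diff_commute)
  then have "independent_set V E (sym_diff It (\<Union>(insert C F)))"
    by (rule independent_set_flip_components[OF assms(1,3,2)])
  ultimately have "reconf_seq V E (sym_diff It (\<Union>(insert C F))) It (sym_diff It (\<Union>(insert C F)) # s)"
    using reconf_seq_Cons s(1) by blast
  moreover have "s \<noteq> []" using s(1) by (simp add: reconf_seq_def)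
  then have "seq_length (sym_diff It (\<Union>(insert C F)) # s) = card (insert C F)"
    using s(2) insert.hyps by (cases s) (simp_all add: seq_length_def)
  ultimately show ?case by blast
qed

theorem mainTheorem19:
  assumes "simple_graph V E"
    and "independent_set V E Is" and "independent_set V E It"
  shows "\<exists>seq. reconf_seq V E Is It seq
           \<and> (\<forall>seq'. reconf_seq V E Is It seq' \<longrightarrow> seq_length seq \<le> seq_length seq')
           \<and> seq_length seq \<le> cc E (sym_diff Is It)"
proof -
  let ?D = "sym_diff Is It"
  have "symp E" using assms(1) by (simp add: simple_graph_def symp_def)
  have "Is \<subseteq> V" "It \<subseteq> V" "finite V"
    using assms by (simp_all add: simple_graph_def independent_set_def)
  then have "finite ?D" by (simp add: sym_diff_def finite_subset)
  then have "finite (components E ?D)" by (rule finite_components)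
  from reconf_seq_flip_components[OF \<open>symp E\<close> assms(2,3) this subset_refl]
  obtain s where s: "reconf_seq V E (sym_diff It (\<Union>(components E ?D))) It s"
    "seq_length s = cc E ?D"
    unfolding cc_def by blast
  have "sym_diff It (\<Union>(components E ?D)) = Is"
    unfolding Union_components by (auto simp: sym_diff_def)
  with s(1) have "reconf_seq V E Is It s" by simp
  then obtain seq where "reconf_seq V E Is It seq"
    "\<forall>s'. reconf_seq V E Is It s' \<longrightarrow> seq_length seq \<le> seq_length s'"
    using ex_has_least_nat[of "reconf_seq V E Is It" s seq_length] by blast
  then show ?thesis using s(2) \<open>reconf_seq V E Is It s\<close> by (metis order_trans)
qed

end
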